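(* Let $k\ge1$ and $n\ge k$ be integers, $m\ge2$ an even integer, and $\mathbf{a}=(a_1,\dots,a_k)\in\mathbb{R}^k$. Then for all $x$, \[ m^{k-n}\left(-\frac12\right)^{k}\frac{n!}{(n-k)!}\Big(\prod_{i=1}^{k}a_i\Big)E_{n-k}^{(k)}(mx\mid\mathbf{a})=\sum_{l_1,\dots,l_k=0}^{m-1}(-1)^{l_1+\dots+l_k}B_n^{(k)}\Big(x+\frac1m\sum_{i=1}^{k}a_il_i\,\Big|\,\mathbf{a}\Big). \]
   Context: The Nörlund polynomials are defined by $\sum_{n\ge0}B_n^{(k)}(x\mid\mathbf{a})\frac{t^n}{n!}=e^{xt}\prod_{j=1}^{k}\frac{a_jt}{e^{a_jt}-1}$, and the higher-order Euler polynomials with parameters by $\sum_{n\ge0}E_n^{(k)}(x\mid\mathbf{a})\frac{t^n}{n!}=e^{xt}\prod_{j=1}^{k}\frac{2}{e^{a_jt}+1}$ (the paper writes $E^{(k)}_{n-k}(mx)$, meaning these polynomials with the same parameter vector $\mathbf{a}$). *)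

theory Defs
  imports "HOL-Computational_Algebra.Formal_Power_Series"
begin

(* Bernoulli-type factor  a t / (e^{a t} - 1)  as a formal power series in t.
   For a = 0 the factor is the removable-singularity value 1. *)
definition bern_factor :: "real \<Rightarrow> real fps" where
  "bern_factor a = (if a = 0 then 1 else (fps_const a * fps_X) / (fps_exp a - 1))"

definition euler_factor :: "real \<Rightarrow> real fps" where
  "euler_factor a = fps_const 2 / (fps_exp a + 1)"

definition norlund :: "nat \<Rightarrow> nat \<Rightarrow> (nat \<Rightarrow> real) \<Rightarrow> real \<Rightarrow> real" where
  "norlund n k a x =
     fact n * fps_nth (fps_exp x * (\<Prod>j\<in>{1..k}. bern_factor (a j))) n"

definition euler_poly :: "nat \<Rightarrow> nat \<Rightarrow> (nat \<Rightarrow> real) \<Rightarrow> real \<Rightarrow> real" where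
  "euler_poly n k a x =
     fact n * fps_nth (fps_exp x * (\<Prod>j\<in>{1..k}. euler_factor (a j))) n"

end

theory Submission
  imports Defs
begin

(* Everything is an identity of formal power series in t with real
   coefficients.  For even m the alternating geometric sum
       A_b(t) = sum_{y<m} (-1)^y e^{y b t / m}
   satisfies (e^{bt/m} + 1) A_b(t) = 1 - e^{bt}, and hence
       A_b(t) * bt/(e^{bt}-1) = (-b/2) t * 2/(e^{bt/m}+1).
   Expanding the product over i of A_{a_i}(t) turns the alternating sum of
   shifted exponentials e^{(x + (1/m) sum a_i l_i) t} into e^{xt} prod_i A_{a_i}(t),
   so the generating function of the right-hand side of the theorem is
       (-1/2)^k (prod a_i) t^k  e^{xt} prod_i 2/(e^{a_i t/m}+1),
   which is t^k times the Euler generating function of E^{(k)}(mx | a) with t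
   rescaled to t/m.  Comparing the n-th coefficients gives the theorem. *)

unbundle fps_syntax

(* The denominator e^{ct} + 1 has constant term 2, so it is a nonzero series. *)
lemma fps_exp_plus_one_nonzero: "fps_exp c + 1 \<noteq> (0 :: 'a :: field_char_0 fps)"
proof
  assume "fps_exp c + 1 = (0 :: 'a fps)"
  then have "(fps_exp c + 1) $ 0 = (0 :: 'a)"
    by simp
  then show False
    by simp
qed

lemma euler_factor_mult: "euler_factor b * (fps_exp b + 1) = fps_const 2"
  unfolding euler_factor_def by (rule dvd_div_mult_self) simp

lemma euler_factor_compose_linear:
  "euler_factor b oo (fps_const c * fps_X) = euler_factor (c * b)"
proof -
  let ?h = "fps_const c * fps_X :: real fps"
  have "(euler_factor b oo ?h) * (fps_exp (c * b) + 1) = fps_const 2"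
    using arg_cong[OF euler_factor_mult[of b], of "\<lambda>f. f oo ?h"]
    by (simp add: fps_compose_mult_distrib fps_compose_add_distrib)
  then show ?thesis
    unfolding euler_factor_def
    by (metis fps_exp_plus_one_nonzero nonzero_mult_div_cancel_right)
qed

(* Defining equation of the Bernoulli kernel bt/(e^{bt}-1); for b \<noteq> 0 the
   division is exact because both sides have subdegree 1. *)
lemma bern_factor_mult: "(fps_exp b - 1) * bern_factor b = fps_const b * fps_X"
proof (cases "b = 0")
  case True
  then show ?thesis by (simp add: bern_factor_def)
next
  case False
  have "subdegree (fps_exp b - 1) = 1" "subdegree (fps_const b * fps_X) = 1"
    by (rule subdegreeI; use False in auto)+
  then have "fps_exp b - 1 dvd fps_const b * fps_X"
    by (subst fps_dvd_iff) auto
  then show ?thesis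
    using False by (simp add: bern_factor_def mult.commute)
qed

(* Alternating geometric sum of exponentials: with q = -e^{ct} the sum is
   sum_{y<m} q^y, and (1 - q) sum_{y<m} q^y = 1 - q^m = 1 - e^{mct} for even m. *)
lemma alternating_exp_sum:
  assumes "even m"
  shows "(fps_exp c + 1) * (\<Sum>y<m. fps_const ((-1) ^ y) * fps_exp (real y * c)) = 1 - fps_exp (real m * c)"
proof -
  have as_power: "fps_const ((-1) ^ y) * fps_exp (real y * c) = (- fps_exp c) ^ y" for y
    by (simp add: fps_exp_power_mult power_minus' flip: fps_const_power fps_const_neg)
  have "(1 - (- fps_exp c)) * (\<Sum>y<m. (- fps_exp c) ^ y) = 1 - (- fps_exp c) ^ m"
    by (rule one_diff_power_eq[symmetric])
  then show ?thesis
    using assms by (simp add: as_power fps_exp_power_mult add.commute)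
qed

(* One-variable factorisation: the alternating sum times the Bernoulli kernel
   is (-b/2) t times the Euler kernel at b/m.  Both sides agree after
   multiplication by the nonzero series e^{bt/m} + 1. *)
lemma alternating_exp_sum_bern_factor:
  assumes "even m" and "m > 0"
  shows "(\<Sum>y<m. fps_const ((-1) ^ y) * fps_exp (real y * (b / m))) * bern_factor b
         = fps_const (- b / 2) * fps_X * euler_factor (b / m)"
proof -
  let ?A = "\<Sum>y<m. fps_const ((-1) ^ y) * fps_exp (real y * (b / m))"
  let ?E = "fps_exp (b / m) + 1"
  have "?E * (?A * bern_factor b) = (1 - fps_exp (real m * (b / m))) * bern_factor b"
    by (simp only: mult.assoc [symmetric] alternating_exp_sum[OF assms(1)])
  also have "\<dots> = - ((fps_exp b - 1) * bern_factor b)"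
    using assms(2) by (simp only: minus_mult_left minus_diff_eq) simp
  also have "\<dots> = fps_const (- b / 2 * 2) * fps_X"
    by (simp add: bern_factor_mult flip: fps_const_neg)
  also have "\<dots> = fps_const (- b / 2) * fps_X * fps_const 2"
    by (simp only: fps_const_mult ac_simps)
  also have "\<dots> = fps_const (- b / 2) * fps_X * (euler_factor (b / m) * ?E)"
    by (simp only: euler_factor_mult)
  finally have "?E * (?A * bern_factor b) = ?E * (fps_const (- b / 2) * fps_X * euler_factor (b / m))"
    by (simp only: ac_simps)
  then show ?thesis
    by (rule mult_left_cancel[OF fps_exp_plus_one_nonzero, THEN iffD1])
qed

lemma fps_const_prod: "fps_const (\<Prod>i\<in>A. f i) = (\<Prod>i\<in>A. fps_const (f i :: 'a :: comm_ring_1))"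
  by (induction A rule: infinite_finite_induct) (simp_all flip: fps_const_mult)

lemma alternating_sum_exp_product:
  assumes "finite I"
  shows "(\<Sum>l\<in>PiE I (\<lambda>_. {0..<m}). fps_const ((-1) ^ (\<Sum>i\<in>I. l i))
            * fps_exp (x + (1 / real m) * (\<Sum>i\<in>I. a i * real (l i))))
         = fps_exp x * (\<Prod>i\<in>I. \<Sum>y<m. fps_const ((-1) ^ y) * fps_exp (real y * (a i / m)))"
proof -
  have summand: "fps_const ((-1) ^ (\<Sum>i\<in>I. l i)) * fps_exp (x + (1 / real m) * (\<Sum>i\<in>I. a i * real (l i)))
      = fps_exp x * (\<Prod>i\<in>I. fps_const ((-1) ^ l i) * fps_exp (real (l i) * (a i / m)))" for l
  proof -
    have "fps_exp ((1 / real m) * (\<Sum>i\<in>I. a i * real (l i))) = (\<Prod>i\<in>I. fps_exp (real (l i) * (a i / m)))"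
      by (induction I rule: infinite_finite_induct)
         (simp_all add: fps_exp_add_mult algebra_simps)
    moreover have "fps_const ((-1::real) ^ (\<Sum>i\<in>I. l i)) = (\<Prod>i\<in>I. fps_const ((-1) ^ l i))"
      by (simp add: power_sum flip: fps_const_prod)
    ultimately show ?thesis
      by (simp add: fps_exp_add_mult prod.distrib algebra_simps)
  qed
  show ?thesis
    unfolding summand using assms
    by (simp add: prod_sum_PiE sum_distrib_left atLeast0LessThan)
qed

lemma alternating_norlund_generating_function:
  assumes "finite I" and "even m" and "m > 0"
  shows "(\<Sum>l\<in>PiE I (\<lambda>_. {0..<m}). fps_const ((-1) ^ (\<Sum>i\<in>I. l i))
            * fps_exp (x + (1 / real m) * (\<Sum>i\<in>I. a i * real (l i))))
           * (\<Prod>i\<in>I. bern_factor (a i))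
         = fps_const ((- 1 / 2) ^ card I * (\<Prod>i\<in>I. a i)) * fps_X ^ card I
           * ((fps_exp (real m * x) * (\<Prod>i\<in>I. euler_factor (a i)))
              oo (fps_const (1 / real m) * fps_X))"
proof -
  have "(\<Prod>i\<in>I. - a i / 2) = (\<Prod>i\<in>I. (- 1 / 2) * a i)"
    by simp
  also have "\<dots> = (- 1 / 2) ^ card I * (\<Prod>i\<in>I. a i)"
    by (simp only: prod.distrib prod_constant)
  finally have constants: "(\<Prod>i\<in>I. fps_const (- a i / 2)) = fps_const ((- 1 / 2) ^ card I * (\<Prod>i\<in>I. a i))"
    by (simp only: flip: fps_const_prod)
  have rescaled: "(fps_exp (real m * x) * (\<Prod>i\<in>I. euler_factor (a i))) oo (fps_const (1 / real m) * fps_X)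
      = fps_exp x * (\<Prod>i\<in>I. euler_factor (a i / m))"
    using assms(3)
    by (simp add: fps_compose_mult_distrib fps_compose_prod_distrib euler_factor_compose_linear)
  have "(\<Sum>l\<in>PiE I (\<lambda>_. {0..<m}). fps_const ((-1) ^ (\<Sum>i\<in>I. l i))
            * fps_exp (x + (1 / real m) * (\<Sum>i\<in>I. a i * real (l i))))
           * (\<Prod>i\<in>I. bern_factor (a i))
      = fps_exp x * (\<Prod>i\<in>I. (\<Sum>y<m. fps_const ((-1) ^ y) * fps_exp (real y * (a i / m)))
                                * bern_factor (a i))"
    unfolding alternating_sum_exp_product[OF assms(1)] by (simp only: prod.distrib mult.assoc)
  also have "\<dots> = fps_exp x * (\<Prod>i\<in>I. fps_const (- a i / 2) * fps_X * euler_factor (a i / m))"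
    by (simp only: alternating_exp_sum_bern_factor[OF assms(2,3)])
  also have "\<dots> = fps_const ((- 1 / 2) ^ card I * (\<Prod>i\<in>I. a i)) * fps_X ^ card I
                     * (fps_exp x * (\<Prod>i\<in>I. euler_factor (a i / m)))"
    by (simp only: prod.distrib prod_constant constants ac_simps)
  finally show ?thesis
    by (simp only: rescaled)
qed

lemma norlund_linear_combination:
  "(\<Sum>l\<in>L. c l * norlund n k a (y l))
   = fact n * ((\<Sum>l\<in>L. fps_const (c l) * fps_exp (y l)) * (\<Prod>j\<in>{1..k}. bern_factor (a j))) $ n"
  unfolding norlund_def sum_distrib_right fps_sum_nth sum_distrib_left
  by (simp only: mult.assoc fps_mult_left_const_nth mult.left_commute[of "fact n"])

lemma fps_X_power_mult_compose_linear_nth: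
  fixes f :: "'a :: comm_ring_1 fps"
  assumes "k \<le> n"
  shows "(fps_X ^ k * (f oo (fps_const d * fps_X))) $ n = d ^ (n - k) * f $ (n - k)"
  using assms by (simp only: fps_X_power_mult_nth fps_nth_compose_linear) simp

lemma power_int_diff_nat:
  assumes "k \<le> n"
  shows "(c :: real) powi (int k - int n) = (1 / c) ^ (n - k)"
proof -
  have "int k - int n = - int (n - k)"
    using assms by simp
  then have "c powi (int k - int n) = inverse (c ^ (n - k))"
    by (simp only: power_int_minus power_int_of_nat)
  then show ?thesis
    by (simp add: power_one_over inverse_eq_divide)
qed

theorem mainTheorem12:
  fixes k n m :: nat and a :: "nat \<Rightarrow> real" and x :: real
  assumes "k \<ge> 1" and "n \<ge> k" and "even m" and "m \<ge> 2"
  shows "real m powi (int k - int n) * (- 1 / 2) ^ k * (fact n / fact (n - k))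
           * (\<Prod>i\<in>{1..k}. a i) * euler_poly (n - k) k a (real m * x)
         = (\<Sum>l\<in>PiE {1..k} (\<lambda>_. {0..<m}).
              (- 1) ^ (\<Sum>i\<in>{1..k}. l i)
              * norlund n k a (x + (1 / real m) * (\<Sum>i\<in>{1..k}. a i * real (l i))))"
proof -
  define Q where "Q = fps_exp (real m * x) * (\<Prod>j\<in>{1..k}. euler_factor (a j))"
  have "(\<Sum>l\<in>PiE {1..k} (\<lambda>_. {0..<m}). (- 1) ^ (\<Sum>i\<in>{1..k}. l i)
          * norlund n k a (x + (1 / real m) * (\<Sum>i\<in>{1..k}. a i * real (l i))))
        = fact n * (fps_const ((- 1 / 2) ^ k * (\<Prod>i\<in>{1..k}. a i))
                    * (fps_X ^ k * (Q oo (fps_const (1 / real m) * fps_X)))) $ n"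
    using alternating_norlund_generating_function[of "{1..k}" m x a] assms(3,4)
    by (simp add: norlund_linear_combination Q_def mult.assoc)
  also have "\<dots> = fact n * (- 1 / 2) ^ k * (\<Prod>i\<in>{1..k}. a i) * (1 / real m) ^ (n - k) * Q $ (n - k)"
    using assms(2) by (simp only: fps_mult_left_const_nth fps_X_power_mult_compose_linear_nth mult.assoc)
  also have "\<dots> = real m powi (int k - int n) * (- 1 / 2) ^ k * (fact n / fact (n - k))
           * (\<Prod>i\<in>{1..k}. a i) * euler_poly (n - k) k a (real m * x)"
    using assms(2,4) by (simp add: euler_poly_def Q_def power_int_diff_nat)
  finally show ?thesis ..
qed
end
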